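(* Consider Algorithm LB-Search (described in the context) run on an $n$-vertex graph with parameter $\eta$. If during the execution of the algorithm, over the total $\tau$ queries, at most $r\cdot\tau$ replies were erroneous (with arbitrary distribution of the errors), then the algorithm outputs the target.
   Context: Setting: $G=(V,E)$ is a finite simple connected graph with $n$ vertices and an unknown target vertex $v^{*}$. A query on vertex $q$ returns a reply $v$; a correct reply is $v=q$ if $q=v^{*}$, and otherwise a neighbor of $q$ on a shortest path from $q$ to $v^{*}$; an erroneous reply may be arbitrary. A vertex $u$ is consistent (compatible) with reply $v$ to query $q$ if $q=v=u$, or $q\ne v$ and $v$ lies on a shortest path between $u$ and $q$; $N(q,v)$ denotes the set of such $u$. For weights $\omega\colon V\to(0,\infty)$ and $X\subseteq V$ let $\omega(X)=\sum_{u\in X}\omega(u)$, $\Lambda(v)=\max_{u\in N(v)}\omega(N(v,u))$ where $N(v)$ is the neighbor set, and call $q$ $\delta$-close to a median if $\Lambda(q)\le(\frac12+\delta)\omega(V)$. Parameters: $0<\eta<\frac18$, $r=\frac12-\eta$, $\delta=\eta/4$, $\Gamma=\frac{1}{1-4\eta}$, $\tau=\frac{10\log_2 n}{\eta^2}$. Algorithm LB-Search: set $\omega(v)=1/n$ and a counter $\ell_v=0$ for every $v$. Repeat for $\tau$ steps: let $q$ be any vertex that is $\delta$-close to a median with respect to the current weights; query $q$; for each vertex $u$ not compatible with the reply, set $\omega(u)\gets\omega(u)/\Gamma$ and $\ell_u\gets\ell_u+1$. Finally return a vertex $v$ with the smallest $\ell_v$. *)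

theory Defs
  imports Complex_Main
begin

definition simple_graph :: "'a set \<Rightarrow> ('a \<Rightarrow> 'a \<Rightarrow> bool) \<Rightarrow> bool" where
  "simple_graph V E \<longleftrightarrow> finite V \<and> (\<forall>u v. E u v \<longrightarrow> u \<in> V \<and> v \<in> V)
     \<and> (\<forall>u v. E u v \<longrightarrow> E v u) \<and> (\<forall>u. \<not> E u u)"

fun walk :: "('a \<Rightarrow> 'a \<Rightarrow> bool) \<Rightarrow> 'a list \<Rightarrow> bool" where
  "walk E [] = False"
| "walk E [x] = True"
| "walk E (x # y # xs) = (E x y \<and> walk E (y # xs))"

definition connected_graph :: "'a set \<Rightarrow> ('a \<Rightarrow> 'a \<Rightarrow> bool) \<Rightarrow> bool" where
  "connected_graph V E \<longleftrightarrow> V \<noteq> {} \<and>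
     (\<forall>u\<in>V. \<forall>v\<in>V. \<exists>xs. walk E xs \<and> hd xs = u \<and> last xs = v)"

definition gdist :: "('a \<Rightarrow> 'a \<Rightarrow> bool) \<Rightarrow> 'a \<Rightarrow> 'a \<Rightarrow> nat" where
  "gdist E u v = (LEAST k. \<exists>xs. walk E xs \<and> hd xs = u \<and> last xs = v \<and> length xs = Suc k)"

definition on_shortest_path :: "('a \<Rightarrow> 'a \<Rightarrow> bool) \<Rightarrow> 'a \<Rightarrow> 'a \<Rightarrow> 'a \<Rightarrow> bool" where
  "on_shortest_path E w a b \<longleftrightarrow> gdist E a w + gdist E w b = gdist E a b"

definition correct_reply :: "('a \<Rightarrow> 'a \<Rightarrow> bool) \<Rightarrow> 'a \<Rightarrow> 'a \<Rightarrow> 'a \<Rightarrow> bool" where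
  "correct_reply E t q v \<longleftrightarrow>
     (if q = t then v = q else E q v \<and> on_shortest_path E v q t)"

definition compatible :: "('a \<Rightarrow> 'a \<Rightarrow> bool) \<Rightarrow> 'a \<Rightarrow> 'a \<Rightarrow> 'a \<Rightarrow> bool" where
  "compatible E q v u \<longleftrightarrow> (q = v \<and> v = u) \<or> (q \<noteq> v \<and> on_shortest_path E v u q)"

definition Ncomp :: "'a set \<Rightarrow> ('a \<Rightarrow> 'a \<Rightarrow> bool) \<Rightarrow> 'a \<Rightarrow> 'a \<Rightarrow> 'a set" where
  "Ncomp V E q v = {u\<in>V. compatible E q v u}"

definition wsum :: "('a \<Rightarrow> real) \<Rightarrow> 'a set \<Rightarrow> real" where
  "wsum \<omega> X = (\<Sum>u\<in>X. \<omega> u)"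

definition Lam :: "'a set \<Rightarrow> ('a \<Rightarrow> 'a \<Rightarrow> bool) \<Rightarrow> ('a \<Rightarrow> real) \<Rightarrow> 'a \<Rightarrow> real" where
  "Lam V E \<omega> v = Max (insert 0 ((\<lambda>u. wsum \<omega> (Ncomp V E v u)) ` {u\<in>V. E v u}))"

definition delta_close :: "'a set \<Rightarrow> ('a \<Rightarrow> 'a \<Rightarrow> bool) \<Rightarrow> ('a \<Rightarrow> real) \<Rightarrow> real \<Rightarrow> 'a \<Rightarrow> bool" where
  "delta_close V E \<omega> \<delta> q \<longleftrightarrow> Lam V E \<omega> q \<le> (1/2 + \<delta>) * wsum \<omega> V"

definition ctr :: "('a \<Rightarrow> 'a \<Rightarrow> bool) \<Rightarrow> 'a list \<Rightarrow> 'a list \<Rightarrow> nat \<Rightarrow> 'a \<Rightarrow> nat" where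
  "ctr E qs vs i u = card {j. j < i \<and> \<not> compatible E (qs ! j) (vs ! j) u}"

definition wt :: "nat \<Rightarrow> real \<Rightarrow> ('a \<Rightarrow> 'a \<Rightarrow> bool) \<Rightarrow> 'a list \<Rightarrow> 'a list \<Rightarrow> nat \<Rightarrow> 'a \<Rightarrow> real" where
  "wt n \<Gamma> E qs vs i u = (1 / real n) / \<Gamma> ^ ctr E qs vs i u"

(* an execution of LB-Search of length T: each query is delta-close to a median
   w.r.t. the current weights; replies are arbitrary vertices *)
definition LB_execution ::
  "'a set \<Rightarrow> ('a \<Rightarrow> 'a \<Rightarrow> bool) \<Rightarrow> real \<Rightarrow> real \<Rightarrow> nat \<Rightarrow> 'a list \<Rightarrow> 'a list \<Rightarrow> bool" where
  "LB_execution V E \<delta> \<Gamma> T qs vs \<longleftrightarrow> length qs = T \<and> length vs = T \<and>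
     set qs \<subseteq> V \<and> set vs \<subseteq> V \<and>
     (\<forall>i<T. delta_close V E (wt (card V) \<Gamma> E qs vs i) \<delta> (qs ! i))"

definition num_errors :: "('a \<Rightarrow> 'a \<Rightarrow> bool) \<Rightarrow> 'a \<Rightarrow> nat \<Rightarrow> 'a list \<Rightarrow> 'a list \<Rightarrow> nat" where
  "num_errors E t T qs vs = card {i. i < T \<and> \<not> correct_reply E t (qs ! i) (vs ! i)}"

end

theory Submission
  imports Defs "HOL-Analysis.Convex"
begin

text \<open>
  Call a vertex \<open>p\<close> heavy if its weight exceeds \<open>(1/2 + \<eta>/4) W\<close>, \<open>W\<close> the total weight.
  The proof follows the potential
  \<open>\<Phi> = min\<^sub>p \<omega>(p)/\<omega>(t) \<cdot> \<psi>(\<omega>(V - {p})/\<omega>(p))\<close>, where \<open>\<psi>(Y) = 1 + Y\<close> for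
  non-heavy \<open>p\<close>, so that all these terms equal \<open>W/\<omega>(t)\<close>, and \<open>\<psi>(Y) = K Y\<^sup>\<kappa>\<close> for heavy \<open>p\<close>.
  As every query is \<open>\<eta>/4\<close>-close to a median, a heavy vertex can only be the query itself,
  and every reply other than the query is compatible with weight at most \<open>(1/2 + \<eta>/4) W\<close>.
  A case analysis along these lines shows that one step multiplies \<open>\<Phi>\<close> by at most
  \<open>c = (1 - \<eta>)\<^sup>2\<close> if the target \<open>t\<close> is compatible with the reply, and by at most
  \<open>g = c \<Gamma>\<close> otherwise. Since \<open>\<Phi> \<le> n\<close> initially, after \<open>\<tau>\<close> steps
  \<open>\<Phi> \<le> n c\<^sup>\<tau> \<Gamma>\<^sup>m\<close> with \<open>m = l\<^sub>t\<close> at most the number of errors, hence \<open>m \<le> (1/2 - \<eta>) \<tau>\<close>,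
  and then the bound is \<open>< 1\<close> by the choice of \<open>\<tau>\<close>. On the other hand, a vertex \<open>u \<noteq> t\<close> with
  \<open>l\<^sub>u \<le> l\<^sub>t\<close> has \<open>\<omega>(u) \<ge> \<omega>(t)\<close>, which forces \<open>\<Phi> \<ge> 1\<close>.
\<close>

section \<open>Shortest paths and compatible vertices\<close>

definition reachable :: "('a \<Rightarrow> 'a \<Rightarrow> bool) \<Rightarrow> 'a \<Rightarrow> 'a \<Rightarrow> bool" where
  "reachable E u v \<longleftrightarrow> (\<exists>xs. walk E xs \<and> hd xs = u \<and> last xs = v)"

lemma walk_nonempty: "walk E xs \<Longrightarrow> xs \<noteq> []"
  by (cases xs) auto

lemma walk_append:
  "walk E xs \<Longrightarrow> walk E ys \<Longrightarrow> last xs = hd ys \<Longrightarrow> walk E (xs @ tl ys)"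
proof (induction xs)
  case (Cons x xs)
  then show ?case by (cases xs; cases ys; cases "tl ys") auto
qed simp

lemma walk_rev:
  assumes "\<And>u v. E u v \<Longrightarrow> E v u" and "walk E xs"
  shows "walk E (rev xs)"
  using assms(2)
proof (induction xs)
  case (Cons x xs)
  show ?case
  proof (cases xs)
    case (Cons y ys)
    then have "walk E (rev xs @ tl [y, x])"
      using Cons.IH Cons.prems assms(1) by (intro walk_append) (auto simp: last_rev)
    then show ?thesis using Cons by simp
  qed simp
qed simp

lemma gdist_witness:
  assumes "reachable E u v"
  shows "\<exists>xs. walk E xs \<and> hd xs = u \<and> last xs = v \<and> length xs = Suc (gdist E u v)"
proof -
  obtain xs where xs: "walk E xs" "hd xs = u" "last xs = v"
    using assms reachable_def by metis
  then have "\<exists>k xs. walk E xs \<and> hd xs = u \<and> last xs = v \<and> length xs = Suc k"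
    using walk_nonempty by (metis Suc_pred length_greater_0_conv)
  then show ?thesis unfolding gdist_def by (rule LeastI_ex)
qed

lemma gdist_le_walk:
  assumes "walk E xs" "hd xs = u" "last xs = v"
  shows "gdist E u v \<le> length xs - 1"
proof -
  have "length xs = Suc (length xs - 1)" using walk_nonempty[OF assms(1)] by simp
  then show ?thesis unfolding gdist_def using assms by (metis (mono_tags, lifting) Least_le)
qed

lemma gdist_refl: "gdist E u u = 0"
  using gdist_le_walk[of E "[u]" u u] by simp

lemma gdist_eq_0:
  assumes "reachable E u v" "gdist E u v = 0"
  shows "u = v"
proof -
  obtain xs where "walk E xs" "hd xs = u" "last xs = v" "length xs = Suc 0"
    using gdist_witness[OF assms(1)] assms(2) by auto
  then show ?thesis by (cases xs) auto
qed

lemma gdist_edge_le: "E u v \<Longrightarrow> gdist E u v \<le> 1"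
  using gdist_le_walk[of E "[u, v]" u v] by simp

lemma gdist_sym_le:
  assumes "\<And>u v. E u v \<Longrightarrow> E v u" and "reachable E u v"
  shows "reachable E v u \<and> gdist E v u \<le> gdist E u v"
proof -
  obtain xs where xs: "walk E xs" "hd xs = u" "last xs = v" "length xs = Suc (gdist E u v)"
    using gdist_witness[OF assms(2)] by auto
  have "walk E (rev xs)" "hd (rev xs) = v" "last (rev xs) = u"
    using walk_rev[OF assms(1) xs(1)] xs walk_nonempty[OF xs(1)] by (simp_all add: hd_rev last_rev)
  then show ?thesis
    using gdist_le_walk[of E "rev xs" v u] xs(4) unfolding reachable_def by auto
qed

lemma gdist_sym:
  assumes "\<And>u v. E u v \<Longrightarrow> E v u" and "reachable E u v"
  shows "gdist E u v = gdist E v u"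
proof -
  have "reachable E v u" "gdist E v u \<le> gdist E u v"
    using gdist_sym_le[OF assms] by auto
  moreover have "gdist E u v \<le> gdist E v u"
    using gdist_sym_le[OF assms(1) \<open>reachable E v u\<close>] by simp
  ultimately show ?thesis by simp
qed

lemma gdist_triangle:
  assumes "reachable E u v" "reachable E v w"
  shows "gdist E u w \<le> gdist E u v + gdist E v w"
proof -
  obtain xs where xs: "walk E xs" "hd xs = u" "last xs = v" "length xs = Suc (gdist E u v)"
    using gdist_witness[OF assms(1)] by auto
  obtain ys where ys: "walk E ys" "hd ys = v" "last ys = w" "length ys = Suc (gdist E v w)"
    using gdist_witness[OF assms(2)] by auto
  have "walk E (xs @ tl ys)" using walk_append xs ys by metis
  moreover have "hd (xs @ tl ys) = u" using xs walk_nonempty[OF xs(1)] by simp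
  moreover have "last (xs @ tl ys) = w"
  proof (cases "tl ys = []")
    case True
    then have "ys = [v]" using ys(2) walk_nonempty[OF ys(1)] by (cases ys) auto
    then show ?thesis using xs(3) ys(3) True by simp
  qed (use ys(3) in \<open>simp add: last_tl\<close>)
  ultimately have "gdist E u w \<le> length (xs @ tl ys) - 1" by (rule gdist_le_walk)
  then show ?thesis using xs ys by simp
qed

lemma shortest_walk_first_edge:
  assumes "reachable E u v" "u \<noteq> v"
  obtains u' where "E u u'" "gdist E u' v + 1 \<le> gdist E u v"
proof -
  obtain xs where xs: "walk E xs" "hd xs = u" "last xs = v" "length xs = Suc (gdist E u v)"
    using gdist_witness[OF assms(1)] by auto
  then obtain u' ys where xs_eq: "xs = u # u' # ys"
    using assms(2) by (cases xs; cases "tl xs") auto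
  have "gdist E u' v \<le> length (u' # ys) - 1"
    using xs xs_eq by (intro gdist_le_walk) auto
  moreover have "E u u'" using xs(1) xs_eq by simp
  ultimately show ?thesis using that xs(4) xs_eq by simp
qed

lemma compatible_same_reply: "compatible E q q u \<longleftrightarrow> u = q"
  unfolding compatible_def by auto

locale connected_simple_graph =
  fixes V :: "'a set" and E :: "'a \<Rightarrow> 'a \<Rightarrow> bool"
  assumes simple: "simple_graph V E" and connected: "connected_graph V E"
begin

lemma edge_sym: "E u v \<Longrightarrow> E v u"
  and edge_irrefl: "\<not> E u u"
  and edge_in_V: "E u v \<Longrightarrow> v \<in> V"
  and finite_V: "finite V"
  using simple unfolding simple_graph_def by blast+

lemma V_nonempty: "V \<noteq> {}"
  using connected unfolding connected_graph_def by blast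

lemma reachable_V: "u \<in> V \<Longrightarrow> v \<in> V \<Longrightarrow> reachable E u v"
  using connected unfolding connected_graph_def reachable_def by blast

lemma gdist_commute: "u \<in> V \<Longrightarrow> v \<in> V \<Longrightarrow> gdist E u v = gdist E v u"
  by (rule gdist_sym[OF edge_sym reachable_V])

lemma gdist_triangle_V:
  "u \<in> V \<Longrightarrow> v \<in> V \<Longrightarrow> w \<in> V \<Longrightarrow> gdist E u w \<le> gdist E u v + gdist E v w"
  using gdist_triangle[of E u v w] reachable_V by blast

lemma gdist_eq_0_iff: "u \<in> V \<Longrightarrow> v \<in> V \<Longrightarrow> gdist E u v = 0 \<longleftrightarrow> u = v"
  using gdist_eq_0[OF reachable_V] gdist_refl by metis

lemma gdist_edge: "E u v \<Longrightarrow> u \<in> V \<Longrightarrow> gdist E u v = 1"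
  using gdist_edge_le[of E u v] gdist_eq_0_iff[of u v] edge_in_V edge_irrefl
  by (metis le_antisym less_one not_le)

lemma query_not_compatible:
  assumes "q \<in> V" "v \<in> V" "v \<noteq> q"
  shows "\<not> compatible E q v q"
  using assms gdist_eq_0_iff[of v q] gdist_refl[of E q]
  unfolding compatible_def on_shortest_path_def by auto

lemma correct_reply_compatible:
  assumes "q \<in> V" "v \<in> V" "t \<in> V" "correct_reply E t q v"
  shows "compatible E q v t"
proof (cases "q = t")
  case False
  then have "E q v" "gdist E q v + gdist E v t = gdist E q t"
    using assms(4) unfolding correct_reply_def on_shortest_path_def by auto
  then show ?thesis
    using edge_irrefl[of q] assms(1-3) gdist_commute
    unfolding compatible_def on_shortest_path_def by (metis add.commute)
qed (use assms(4) in \<open>auto simp: correct_reply_def compatible_def\<close>)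

lemma Ncomp_subset_Ncomp_neighbour:
  assumes "q \<in> V" "v \<in> V" "v \<noteq> q"
  obtains v' where "E q v'" "Ncomp V E q v \<subseteq> Ncomp V E q v'"
proof -
  obtain v' where v': "E q v'" "gdist E v' v + 1 \<le> gdist E q v"
    using shortest_walk_first_edge[OF reachable_V[OF assms(1,2)]] assms(3) by metis
  have v'V: "v' \<in> V" using edge_in_V v' by blast
  have "gdist E v' q = 1"
    using gdist_edge[OF v'(1) assms(1)] gdist_commute[OF assms(1) v'V] by simp
  have "u \<in> Ncomp V E q v'" if "u \<in> Ncomp V E q v" for u
  proof -
    have uV: "u \<in> V" and "gdist E u v + gdist E v q = gdist E u q"
      using that assms(3) unfolding Ncomp_def compatible_def on_shortest_path_def by auto
    moreover have "gdist E u v' \<le> gdist E u v + gdist E v v'"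
      and "gdist E u q \<le> gdist E u v' + gdist E v' q"
      using gdist_triangle_V uV assms v'V by blast+
    ultimately have "gdist E u v' + gdist E v' q = gdist E u q"
      using v'(2) \<open>gdist E v' q = 1\<close> gdist_commute[OF assms(2) v'V] gdist_commute[OF assms(1,2)]
      by linarith
    then show ?thesis
      using uV edge_irrefl v'(1) unfolding Ncomp_def compatible_def on_shortest_path_def by auto
  qed
  then show ?thesis using that v'(1) by blast
qed

lemma wsum_Ncomp_le_Lam:
  assumes "E q v"
  shows "wsum \<omega> (Ncomp V E q v) \<le> Lam V E \<omega> q"
  unfolding Lam_def using assms edge_in_V finite_V by (intro Max_ge) auto

lemma wsum_Ncomp_le:
  assumes "q \<in> V" "v \<in> V" "v \<noteq> q" "delta_close V E \<omega> \<delta> q" "\<forall>u\<in>V. 0 \<le> \<omega> u"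
  shows "wsum \<omega> (Ncomp V E q v) \<le> (1/2 + \<delta>) * wsum \<omega> V"
proof -
  obtain v' where v': "E q v'" "Ncomp V E q v \<subseteq> Ncomp V E q v'"
    using Ncomp_subset_Ncomp_neighbour assms by blast
  have "wsum \<omega> (Ncomp V E q v) \<le> wsum \<omega> (Ncomp V E q v')"
    unfolding wsum_def using v'(2) assms(5) finite_V by (intro sum_mono2) (auto simp: Ncomp_def)
  also have "\<dots> \<le> Lam V E \<omega> q" by (rule wsum_Ncomp_le_Lam[OF v'(1)])
  also have "\<dots> \<le> (1/2 + \<delta>) * wsum \<omega> V" using assms(4) unfolding delta_close_def by simp
  finally show ?thesis .
qed

lemma heavy_vertex_is_query:
  assumes "q \<in> V" "h \<in> V" "delta_close V E \<omega> \<delta> q" "\<forall>u\<in>V. 0 < \<omega> u"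
    and "(1/2 + \<delta>) * wsum \<omega> V < \<omega> h"
  shows "h = q"
proof (rule ccontr)
  assume "h \<noteq> q"
  then have "h \<in> Ncomp V E q h"
    using assms(2) gdist_refl unfolding Ncomp_def compatible_def on_shortest_path_def by auto
  then have "\<omega> h \<le> wsum \<omega> (Ncomp V E q h)"
    unfolding wsum_def using assms(4) finite_V
    by (intro member_le_sum) (auto simp: Ncomp_def less_imp_le)
  also have "\<dots> \<le> (1/2 + \<delta>) * wsum \<omega> V"
    using wsum_Ncomp_le[OF assms(1,2) \<open>h \<noteq> q\<close> assms(3)] assms(4) by (simp add: less_imp_le)
  finally show False using assms(5) by simp
qed

end

section \<open>Elementary real inequalities\<close>

lemma powr_le_affine:
  fixes l s :: real
  assumes "0 \<le> l" "l \<le> 1" "0 \<le> s"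
  shows "s powr l \<le> l * s + (1 - l)"
proof (cases "s = 0")
  case False
  then show ?thesis using Youngs_inequality_0[of l "1 - l" s 1] assms by simp
qed (use assms in simp)

lemma ln_one_minus_le:
  fixes x :: real
  assumes "0 \<le> x" "x < 1"
  shows "ln (1 - x) \<le> - x - x^2/2"
proof -
  define f where "f x = ln (1 - x) + x + x^2/2" for x :: real
  have "f x \<le> f 0"
  proof (rule DERIV_nonpos_imp_nonincreasing[OF assms(1)])
    fix y :: real
    assume "0 \<le> y" "y \<le> x"
    then have "y < 1" using assms by simp
    then have "(f has_real_derivative - (y^2 / (1 - y))) (at y)"
      unfolding f_def
      by (auto intro!: derivative_eq_intros) (simp add: field_simps power2_eq_square)
    moreover have "0 \<le> y^2 / (1 - y)" using \<open>y < 1\<close> by simp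
    ultimately show "\<exists>d. (f has_real_derivative d) (at y) \<and> d \<le> 0" by auto
  qed
  then show ?thesis by (simp add: f_def)
qed

lemma minus_ln_one_minus_le:
  fixes x :: real
  assumes "0 \<le> x" "x \<le> 1/2"
  shows "- ln (1 - x) \<le> x + x^2/2 + x^3/3 + x^4/4 + 2*x^5/5"
proof -
  define f where "f x = - ln (1 - x) - x - x^2/2 - x^3/3 - x^4/4 - 2*x^5/5" for x :: real
  have "f x \<le> f 0"
  proof (rule DERIV_nonpos_imp_nonincreasing[OF assms(1)])
    fix y :: real
    assume y: "0 \<le> y" "y \<le> x"
    then have "y \<le> 1/2" using assms by simp
    then have "(f has_real_derivative y^4 * (2*y - 1) / (1 - y)) (at y)"
      unfolding f_def
      by (auto intro!: derivative_eq_intros) (simp_all add: field_simps, simp add: algebra_simps power_def)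
    moreover have "y^4 * (2*y - 1) / (1 - y) \<le> 0"
      using y \<open>y \<le> 1/2\<close> by (intro divide_nonpos_pos mult_nonneg_nonpos) auto
    ultimately show "\<exists>d. (f has_real_derivative d) (at y) \<and> d \<le> 0" by auto
  qed
  then show ?thesis by (simp add: f_def)
qed

section \<open>The potential\<close>

locale LB_potential =
  fixes \<eta> :: real
  assumes \<eta>_pos: "0 < \<eta>" and \<eta>_less: "\<eta> < 1/8"
begin

text \<open>\<open>c\<close> and \<open>g\<close> bound the factor by which the potential changes in one step, according to
  whether the target is compatible with the reply or not. The exponent \<open>\<kappa>\<close> is chosen so that
  \<open>\<Gamma> powr \<kappa> = g\<close>, the threshold \<open>y\<^sub>0\<close> so that \<open>Y < y\<^sub>0\<close> holds exactly for heavy vertices,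
  and \<open>K\<close> so that \<open>\<psi>\<close> is continuous at \<open>y\<^sub>0\<close>.\<close>

definition c :: real where "c = (1 - \<eta>)^2"
definition \<Gamma> :: real where "\<Gamma> = 1 / (1 - 4*\<eta>)"
definition g :: real where "g = c * \<Gamma>"
definition y\<^sub>0 :: real where "y\<^sub>0 = (2 - \<eta>) / (2 + \<eta>)"
definition \<kappa> :: real where "\<kappa> = ln g / ln \<Gamma>"
definition K :: real where "K = (1 + y\<^sub>0) / y\<^sub>0 powr \<kappa>"
definition \<psi> :: "real \<Rightarrow> real" where
  "\<psi> Y = (if Y < y\<^sub>0 then K * Y powr \<kappa> else 1 + Y)"

lemma c_pos: "0 < c"
  using \<eta>_less by (simp add: c_def)

lemma c_less_1: "c < 1"
proof -
  have "(1 - \<eta>) * (1 - \<eta>) < 1 * 1"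
    using \<eta>_pos \<eta>_less by (intro mult_strict_mono') auto
  then show ?thesis by (simp add: c_def power2_eq_square)
qed

lemma \<Gamma>_gt_1: "1 < \<Gamma>"
  using \<eta>_pos \<eta>_less by (simp add: \<Gamma>_def)

lemma \<Gamma>_pos: "0 < \<Gamma>"
  using \<Gamma>_gt_1 by simp

lemma one_le_c_g: "1 \<le> c * g"
proof -
  have "(1 - \<eta>)^4 = 1 - 4*\<eta> + \<eta>^2 * (6 - 4*\<eta> + \<eta>^2)"
    by (simp add: power_def algebra_simps)
  moreover have "0 \<le> \<eta>^2 * (6 - 4*\<eta> + \<eta>^2)"
    using \<eta>_less by (intro mult_nonneg_nonneg) auto
  ultimately have "1 \<le> (1 - \<eta>)^4 / (1 - 4*\<eta>)" using \<eta>_less by simp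
  then show ?thesis by (simp add: c_def g_def \<Gamma>_def power_def)
qed

lemma g_pos: "0 < g"
  using c_pos \<Gamma>_pos by (simp add: g_def)

lemma g_le_\<Gamma>: "g \<le> \<Gamma>"
  using c_less_1 \<Gamma>_pos by (simp add: g_def)

lemma \<Gamma>_powr_\<kappa>: "\<Gamma> powr \<kappa> = g"
  using \<Gamma>_gt_1 g_pos by (simp add: \<kappa>_def powr_def)

lemma \<kappa>_le_1: "\<kappa> \<le> 1"
  using \<Gamma>_gt_1 g_le_\<Gamma> g_pos by (simp add: \<kappa>_def)

lemma \<kappa>_ge_half: "1/2 \<le> \<kappa>"
proof -
  have "\<Gamma> \<le> g * g"
    using one_le_c_g \<Gamma>_pos by (simp add: g_def algebra_simps)
  then have "ln \<Gamma> \<le> ln (g * g)"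
    using \<Gamma>_pos by simp
  also have "\<dots> = 2 * ln g"
    using g_pos by (simp add: ln_mult)
  finally show ?thesis using \<Gamma>_gt_1 by (simp add: \<kappa>_def field_simps)
qed

lemma \<kappa>_pos: "0 < \<kappa>"
  using \<kappa>_ge_half by simp

lemma y\<^sub>0_pos: "0 < y\<^sub>0" and y\<^sub>0_less_1: "y\<^sub>0 < 1"
  using \<eta>_pos \<eta>_less by (auto simp: y\<^sub>0_def)

lemma K_ge_1: "1 \<le> K"
proof -
  have "y\<^sub>0 powr \<kappa> \<le> 1"
    using y\<^sub>0_pos y\<^sub>0_less_1 \<kappa>_pos by (intro powr_le1) auto
  then show ?thesis using y\<^sub>0_pos by (simp add: K_def field_simps)
qed

lemma K_powr_scale: "0 \<le> s \<Longrightarrow> K * (s * y\<^sub>0) powr \<kappa> = (1 + y\<^sub>0) * s powr \<kappa>"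
  using y\<^sub>0_pos by (simp add: K_def powr_mult)

lemma \<psi>_le:
  assumes "0 \<le> Y"
  shows "\<psi> Y \<le> 1 + Y"
proof (cases "Y < y\<^sub>0")
  case True
  define s where "s = Y / y\<^sub>0"
  have s: "0 \<le> s" "s \<le> 1" "Y = s * y\<^sub>0"
    using assms True y\<^sub>0_pos by (auto simp: s_def)
  have "\<psi> Y = (1 + y\<^sub>0) * s powr \<kappa>"
    using True s K_powr_scale by (simp add: \<psi>_def)
  also have "\<dots> \<le> (1 + y\<^sub>0) * (\<kappa> * s + (1 - \<kappa>))"
    using powr_le_affine[of \<kappa> s] \<kappa>_pos \<kappa>_le_1 s y\<^sub>0_pos by (intro mult_left_mono) auto
  also have "\<dots> \<le> 1 + Y"
  proof -
    have "y\<^sub>0 \<le> (1 + y\<^sub>0) * (1/2)"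
      using y\<^sub>0_less_1 by simp
    also have "\<dots> \<le> (1 + y\<^sub>0) * \<kappa>"
      using \<kappa>_ge_half y\<^sub>0_pos by (intro mult_left_mono) auto
    finally have "y\<^sub>0 \<le> (1 + y\<^sub>0) * \<kappa>" .
    then have "(s - 1) * ((1 + y\<^sub>0) * \<kappa> - y\<^sub>0) \<le> 0"
      using s by (intro mult_nonpos_nonneg) auto
    then show ?thesis using s by (simp add: algebra_simps)
  qed
  finally show ?thesis .
qed (simp add: \<psi>_def)

lemma \<psi>_ge:
  assumes "0 \<le> Y"
  shows "Y \<le> \<psi> Y"
proof (cases "Y < y\<^sub>0")
  case True
  have "Y = Y powr 1" using assms by (cases "Y = 0") auto
  also have "\<dots> \<le> Y powr \<kappa>"
    using assms True y\<^sub>0_less_1 \<kappa>_le_1 by (intro powr_mono') auto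
  also have "\<dots> \<le> K * Y powr \<kappa>"
    using K_ge_1 by (simp add: mult_le_cancel_right1)
  finally show ?thesis using True by (simp add: \<psi>_def)
qed (simp add: \<psi>_def)

text \<open>Concavity of \<open>x powr \<kappa>\<close> between \<open>1\<close> and \<open>\<Gamma>\<close>, from the weighted AM-GM inequality at
  \<open>1/s\<close> and \<open>\<Gamma>/s\<close>.\<close>

lemma chord_le_powr_\<kappa>:
  assumes "0 \<le> \<theta>" "\<theta> \<le> 1"
  shows "1 + \<theta> * (g - 1) \<le> ((1 - \<theta>) + \<theta> * \<Gamma>) powr \<kappa>"
proof -
  define s where "s = (1 - \<theta>) + \<theta> * \<Gamma>"
  have "1 \<le> s"
    using assms \<Gamma>_gt_1 mult_left_mono[of 1 \<Gamma> \<theta>] by (simp add: s_def algebra_simps)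
  have "(1 - \<theta>) * (1/s) powr \<kappa> + \<theta> * (\<Gamma>/s) powr \<kappa>
        \<le> (1 - \<theta>) * (\<kappa> * (1/s) + (1 - \<kappa>)) + \<theta> * (\<kappa> * (\<Gamma>/s) + (1 - \<kappa>))"
    using assms \<open>1 \<le> s\<close> \<Gamma>_pos \<kappa>_pos \<kappa>_le_1
    by (intro add_mono mult_left_mono powr_le_affine) auto
  also have "\<dots> = \<kappa> * (((1 - \<theta>) + \<theta> * \<Gamma>) / s) + (1 - \<kappa>)"
    using \<open>1 \<le> s\<close> by (simp add: field_simps)
  also have "\<dots> = 1"
    using \<open>1 \<le> s\<close> by (simp add: s_def)
  finally have "((1 - \<theta>) + \<theta> * g) / s powr \<kappa> \<le> 1"
    using \<open>1 \<le> s\<close> \<Gamma>_pos by (simp add: powr_divide \<Gamma>_powr_\<kappa> add_divide_distrib)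
  then show ?thesis
    using \<open>1 \<le> s\<close> unfolding s_def[symmetric] by (simp add: divide_le_eq algebra_simps)
qed

lemma y\<^sub>0_slope_le: "y\<^sub>0 * (\<Gamma> - 1) \<le> (1 + y\<^sub>0) * (g - 1)"
proof -
  have "g - 1 = \<eta> * (2 + \<eta>) / (1 - 4*\<eta>)"
    using \<eta>_less by (simp add: g_def c_def \<Gamma>_def field_simps power2_eq_square)
  moreover have "1 + y\<^sub>0 = 4 / (2 + \<eta>)"
    using \<eta>_pos by (simp add: y\<^sub>0_def field_simps)
  ultimately have "(1 + y\<^sub>0) * (g - 1) = 4*\<eta> / (1 - 4*\<eta>)"
    using \<eta>_pos by simp
  moreover have "\<Gamma> - 1 = 4*\<eta> / (1 - 4*\<eta>)"
    using \<eta>_less by (simp add: \<Gamma>_def field_simps)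
  moreover have "y\<^sub>0 * (4*\<eta> / (1 - 4*\<eta>)) \<le> 4*\<eta> / (1 - 4*\<eta>)"
    using y\<^sub>0_less_1 y\<^sub>0_pos \<eta>_pos \<eta>_less by (intro mult_left_le_one_le) auto
  ultimately show ?thesis by simp
qed

lemma \<psi>_le_K_powr:
  assumes "0 \<le> Y" "Y \<le> \<Gamma> * y\<^sub>0"
  shows "\<psi> Y \<le> K * Y powr \<kappa>"
proof (cases "Y < y\<^sub>0")
  case False
  define \<theta> where "\<theta> = (Y / y\<^sub>0 - 1) / (\<Gamma> - 1)"
  have \<theta>: "0 \<le> \<theta>" "\<theta> \<le> 1"
    using assms False y\<^sub>0_pos \<Gamma>_gt_1 by (auto simp: \<theta>_def field_simps)
  have "\<theta> * (\<Gamma> - 1) = Y / y\<^sub>0 - 1"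
    using \<Gamma>_gt_1 by (simp add: \<theta>_def)
  then have Y: "Y = ((1 - \<theta>) + \<theta> * \<Gamma>) * y\<^sub>0"
    using y\<^sub>0_pos by (simp add: field_simps)
  have "\<psi> Y = 1 + y\<^sub>0 + \<theta> * (y\<^sub>0 * (\<Gamma> - 1))"
    using False Y by (simp add: \<psi>_def algebra_simps)
  also have "\<dots> \<le> 1 + y\<^sub>0 + \<theta> * ((1 + y\<^sub>0) * (g - 1))"
    using y\<^sub>0_slope_le \<theta> by (intro add_left_mono mult_left_mono) auto
  also have "\<dots> = (1 + y\<^sub>0) * (1 + \<theta> * (g - 1))"
    by (simp add: algebra_simps)
  also have "\<dots> \<le> (1 + y\<^sub>0) * ((1 - \<theta>) + \<theta> * \<Gamma>) powr \<kappa>"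
    using chord_le_powr_\<kappa>[OF \<theta>] y\<^sub>0_pos by (intro mult_left_mono) auto
  also have "\<dots> = K * Y powr \<kappa>"
  proof -
    have "0 \<le> (1 - \<theta>) + \<theta> * \<Gamma>"
      using \<theta> \<Gamma>_pos by (intro add_nonneg_nonneg mult_nonneg_nonneg) auto
    then show ?thesis unfolding Y by (simp add: K_powr_scale)
  qed
  finally show ?thesis .
qed (simp add: \<psi>_def)

lemma ln_c_plus_ln_\<Gamma>_le: "ln c + (1/2 - \<eta>) * ln \<Gamma> \<le> - (\<eta>^2 / 8)"
proof -
  define B where "B = 4*\<eta> + (4*\<eta>)^2/2 + (4*\<eta>)^3/3 + (4*\<eta>)^4/4 + 2*(4*\<eta>)^5/5"
  have "ln c = 2 * ln (1 - \<eta>)"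
    using \<eta>_less by (simp add: c_def ln_realpow)
  also have "\<dots> \<le> -2*\<eta> - \<eta>^2"
    using ln_one_minus_le[of \<eta>] \<eta>_pos \<eta>_less by simp
  finally have ln_c: "ln c \<le> -2*\<eta> - \<eta>^2" .
  have "ln \<Gamma> = - ln (1 - 4*\<eta>)"
    using \<eta>_less by (simp add: \<Gamma>_def ln_div)
  also have "\<dots> \<le> B"
    unfolding B_def using minus_ln_one_minus_le[of "4*\<eta>"] \<eta>_pos \<eta>_less by simp
  finally have "(1/2 - \<eta>) * ln \<Gamma> \<le> (1/2 - \<eta>) * B"
    using \<eta>_less by (intro mult_left_mono) auto
  moreover have "-2*\<eta> - \<eta>^2 + (1/2 - \<eta>) * B
      = \<eta>^2 * (-1 + (8/3)*\<eta> + (32/3)*\<eta>^2 + (704/5)*\<eta>^3 - (2048/5)*\<eta>^4)"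
    by (simp add: B_def power_def field_simps)
  moreover have "\<eta>^2 * (-1 + (8/3)*\<eta> + (32/3)*\<eta>^2 + (704/5)*\<eta>^3 - (2048/5)*\<eta>^4)
      \<le> \<eta>^2 * (-1/8)"
  proof (intro mult_left_mono)
    have "\<eta>^2 \<le> 1/64" "\<eta>^3 \<le> 1/512"
      using power_mono[of \<eta> "1/8" 2] power_mono[of \<eta> "1/8" 3] \<eta>_pos \<eta>_less
      by (simp_all add: power_divide)
    moreover have "0 \<le> \<eta>^4" by simp
    ultimately show "-1 + (8/3)*\<eta> + (32/3)*\<eta>^2 + (704/5)*\<eta>^3 - (2048/5)*\<eta>^4 \<le> -1/8"
      using \<eta>_less by linarith
  qed simp
  ultimately show ?thesis using ln_c by simp
qed

lemma potential_bound_less_1: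
  fixes n :: real and T l :: nat
  assumes "2 \<le> n" and "10 * log 2 n / \<eta>^2 \<le> T" and "l \<le> (1/2 - \<eta>) * T"
  shows "n * c ^ T * \<Gamma> ^ l < 1"
proof -
  have "ln (n * c ^ T * \<Gamma> ^ l) = ln n + T * ln c + l * ln \<Gamma>"
    using assms(1) c_pos \<Gamma>_pos by (simp add: ln_mult ln_realpow)
  also have "\<dots> \<le> ln n + T * (ln c + (1/2 - \<eta>) * ln \<Gamma>)"
    using mult_right_mono[OF assms(3), of "ln \<Gamma>"] \<Gamma>_gt_1 by (simp add: algebra_simps)
  also have "\<dots> \<le> ln n - T * \<eta>^2 / 8"
    using mult_left_mono[OF ln_c_plus_ln_\<Gamma>_le, of T] by simp
  also have "\<dots> < 0"
  proof -
    have "ln n < log 2 n"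
      using assms(1) ln_2_less_1 by (simp add: log_def less_divide_eq)
    moreover have "10 * log 2 n \<le> T * \<eta>^2"
      using assms(2) \<eta>_pos by (simp add: divide_le_eq)
    moreover have "0 < ln n" using assms(1) by simp
    ultimately show ?thesis by linarith
  qed
  finally show ?thesis
    using assms(1) c_pos \<Gamma>_pos by (simp add: ln_less_zero_iff)
qed

definition heavy :: "'a set \<Rightarrow> ('a \<Rightarrow> real) \<Rightarrow> 'a \<Rightarrow> bool" where
  "heavy V w p \<longleftrightarrow> (1/2 + \<eta>/4) * sum w V < w p"

definition vertex_potential :: "'a set \<Rightarrow> ('a \<Rightarrow> real) \<Rightarrow> 'a \<Rightarrow> 'a \<Rightarrow> real" where
  "vertex_potential V w t p = w p / w t * \<psi> (sum w (V - {p}) / w p)"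

definition potential :: "'a set \<Rightarrow> ('a \<Rightarrow> real) \<Rightarrow> 'a \<Rightarrow> real" where
  "potential V w t = Min (vertex_potential V w t ` V)"

definition update :: "'a set \<Rightarrow> ('a \<Rightarrow> real) \<Rightarrow> 'a \<Rightarrow> real" where
  "update C w u = (if u \<in> C then w u else w u / \<Gamma>)"

lemma heavy_iff_ratio:
  assumes "finite V" "p \<in> V" "0 < w p"
  shows "heavy V w p \<longleftrightarrow> sum w (V - {p}) / w p < y\<^sub>0"
proof -
  have "sum w V = w p + sum w (V - {p})"
    using assms by (simp add: sum.remove)
  then show ?thesis
    using assms \<eta>_pos by (simp add: heavy_def y\<^sub>0_def field_simps)
qed

lemma heavy_unique:
  assumes "finite V" "\<forall>u\<in>V. 0 < w u" "p \<in> V" "p' \<in> V" "heavy V w p" "heavy V w p'"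
  shows "p = p'"
proof (rule ccontr)
  assume "p \<noteq> p'"
  then have "w p + w p' \<le> sum w V"
    using assms(1-4) sum_mono2[of V "{p, p'}" w] by (auto simp: less_imp_le)
  moreover have "0 \<le> \<eta> * sum w V"
    using assms(2) \<eta>_pos by (intro mult_nonneg_nonneg sum_nonneg) (auto simp: less_imp_le)
  ultimately show False
    using assms(5,6) by (simp add: heavy_def algebra_simps)
qed

lemma vertex_potential_le:
  assumes "finite V" "\<forall>u\<in>V. 0 < w u" "p \<in> V" "t \<in> V"
  shows "vertex_potential V w t p \<le> sum w V / w t"
proof -
  have "0 < w p" "0 < w t" "0 \<le> sum w (V - {p})"
    using assms by (auto intro!: sum_nonneg simp: less_imp_le)
  then have "vertex_potential V w t p \<le> w p / w t * (1 + sum w (V - {p}) / w p)"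
    unfolding vertex_potential_def by (intro mult_left_mono \<psi>_le) auto
  also have "\<dots> = (w p + sum w (V - {p})) / w t"
    using \<open>0 < w p\<close> by (simp add: add_divide_distrib distrib_left)
  also have "\<dots> = sum w V / w t"
    using assms by (simp add: sum.remove)
  finally show ?thesis .
qed

lemma vertex_potential_ge:
  assumes "finite V" "\<forall>u\<in>V. 0 < w u" "p \<in> V" "t \<in> V"
  shows "sum w (V - {p}) / w t \<le> vertex_potential V w t p"
proof -
  have "0 < w p" "0 < w t" "0 \<le> sum w (V - {p})"
    using assms by (auto intro!: sum_nonneg simp: less_imp_le)
  then have "w p / w t * (sum w (V - {p}) / w p) \<le> vertex_potential V w t p"
    unfolding vertex_potential_def by (intro mult_left_mono \<psi>_ge) auto
  then show ?thesis using \<open>0 < w p\<close> by simp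
qed

lemma vertex_potential_not_heavy:
  assumes "finite V" "\<forall>u\<in>V. 0 < w u" "p \<in> V" "\<not> heavy V w p"
  shows "vertex_potential V w t p = sum w V / w t"
proof -
  have "0 < w p" using assms by auto
  then have "\<not> sum w (V - {p}) / w p < y\<^sub>0"
    using heavy_iff_ratio[of V p w] assms by auto
  then have "vertex_potential V w t p = w p / w t * (1 + sum w (V - {p}) / w p)"
    by (simp add: vertex_potential_def \<psi>_def)
  also have "\<dots> = (w p + sum w (V - {p})) / w t"
    using \<open>0 < w p\<close> by (simp add: add_divide_distrib distrib_left)
  also have "\<dots> = sum w V / w t"
    using assms by (simp add: sum.remove)
  finally show ?thesis .
qed

lemma potential_le: "finite V \<Longrightarrow> p \<in> V \<Longrightarrow> potential V w t \<le> vertex_potential V w t p"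
  unfolding potential_def by (intro Min_le) auto

lemma potential_not_heavy:
  assumes "finite V" "V \<noteq> {}" "\<forall>u\<in>V. 0 < w u" "\<forall>p\<in>V. \<not> heavy V w p"
  shows "potential V w t = sum w V / w t"
proof -
  have "vertex_potential V w t p = sum w V / w t" if "p \<in> V" for p
    by (rule vertex_potential_not_heavy) (use assms that in auto)
  then have "vertex_potential V w t ` V = {sum w V / w t}"
    using assms(2) by auto
  then show ?thesis by (simp add: potential_def)
qed

lemma potential_heavy:
  assumes "finite V" "\<forall>u\<in>V. 0 < w u" "h \<in> V" "t \<in> V" "heavy V w h"
  shows "potential V w t = vertex_potential V w t h"
  unfolding potential_def
proof (rule Min_eqI)
  fix y
  assume "y \<in> vertex_potential V w t ` V"
  then obtain p where "p \<in> V" "y = vertex_potential V w t p" by blast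
  moreover have "vertex_potential V w t p = sum w V / w t" if "p \<noteq> h"
    using assms heavy_unique[of V w p h] vertex_potential_not_heavy[of V w p t] that \<open>p \<in> V\<close>
    by blast
  ultimately show "vertex_potential V w t h \<le> y"
    using vertex_potential_le[of V w h t] assms by (cases "p = h") auto
qed (use assms in auto)

lemma potential_ge_1:
  assumes "finite V" "\<forall>v\<in>V. 0 < w v" "t \<in> V" "u \<in> V" "u \<noteq> t" "w t \<le> w u"
  shows "1 \<le> potential V w t"
proof -
  have "1 \<le> vertex_potential V w t p" if "p \<in> V" for p
  proof -
    have "\<exists>x \<in> V - {p}. w t \<le> w x"
    proof (cases "p = t")
      case True
      then show ?thesis using assms(4-6) by blast
    qed (use assms(3) in blast)
    then obtain x where x: "x \<in> V - {p}" "w t \<le> w x" ..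
    have "1 \<le> w x / w t"
      using x assms(2,3) by simp
    also have "\<dots> \<le> sum w (V - {p}) / w t"
      using x assms(1-3) by (intro divide_right_mono member_le_sum) (auto simp: less_imp_le)
    also have "\<dots> \<le> vertex_potential V w t p"
      by (rule vertex_potential_ge) (use assms that in auto)
    finally show ?thesis .
  qed
  then show ?thesis
    unfolding potential_def using assms(1,3) by (intro Min.boundedI) auto
qed

lemma update_pos: "\<forall>u\<in>V. 0 < w u \<Longrightarrow> \<forall>u\<in>V. 0 < update C w u"
  using \<Gamma>_pos by (simp add: update_def)

lemma update_le: "0 \<le> w u \<Longrightarrow> update C w u \<le> w u"
  using \<Gamma>_gt_1 by (simp add: update_def divide_le_eq mult_le_cancel_left1)

lemma divide_update: "0 < w t \<Longrightarrow> w t / update C w t = (if t \<in> C then 1 else \<Gamma>)"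
  by (simp add: update_def)

text \<open>The factor \<open>c\<close> arises as \<open>(1/2 + \<eta>/4) \<cdot> 4\<eta> + (1 - 4\<eta>) = (1 - \<eta>)\<^sup>2\<close>.\<close>

lemma sum_update_le:
  assumes "finite V" "\<forall>u\<in>V. 0 \<le> w u" "sum w (C \<inter> V) \<le> (1/2 + \<eta>/4) * sum w V"
  shows "sum (update C w) V \<le> c * sum w V"
proof -
  have "sum (update C w) V = sum w (C \<inter> V) + sum w (V - C) / \<Gamma>"
    using assms(1) sum.Int_Diff[of V "update C w" C]
    by (simp add: update_def Int_commute sum_divide_distrib)
  also have "\<dots> = 4*\<eta> * sum w (C \<inter> V) + (1 - 4*\<eta>) * sum w V"
    using assms(1) sum.Int_Diff[of V w C] by (simp add: \<Gamma>_def Int_commute algebra_simps)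
  also have "\<dots> \<le> 4*\<eta> * ((1/2 + \<eta>/4) * sum w V) + (1 - 4*\<eta>) * sum w V"
    using assms(3) \<eta>_pos by simp
  also have "\<dots> = c * sum w V"
    by (simp add: c_def power2_eq_square algebra_simps)
  finally show ?thesis .
qed

lemma one_div_g_le_c: "1 / g \<le> c"
  using one_le_c_g g_pos by (simp add: divide_le_eq mult.commute)

lemma \<Gamma>_div_g_le_g: "\<Gamma> / g \<le> g"
proof -
  have "\<Gamma> / g = 1 / c" using \<Gamma>_pos by (simp add: g_def)
  also have "\<dots> \<le> g" using one_le_c_g c_pos by (simp add: divide_le_eq mult.commute)
  finally show ?thesis .
qed

lemma vertex_potential_update_singleton:
  assumes "finite V" "\<forall>u\<in>V. 0 < w u" "h \<in> V" "t \<in> V" "heavy V w h" "C \<inter> V = {h}"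
  shows "vertex_potential V (update C w) t h
    \<le> (if t \<in> C then c else g) * vertex_potential V w t h"
proof -
  define Y where "Y = sum w (V - {h}) / w h"
  have "0 < w h" "0 < w t" "0 \<le> Y"
    using assms(2-4) by (auto simp: Y_def less_imp_le intro!: divide_nonneg_pos sum_nonneg)
  have "Y < y\<^sub>0"
    using heavy_iff_ratio[of V h w] assms(1,3,5) \<open>0 < w h\<close> by (simp add: Y_def)
  have w'_h: "update C w h = w h"
    using assms(3,6) by (auto simp: update_def)
  moreover have "sum (update C w) (V - {h}) = sum w (V - {h}) / \<Gamma>"
    unfolding sum_divide_distrib using assms(6) by (intro sum.cong) (auto simp: update_def)
  ultimately have Y': "sum (update C w) (V - {h}) / update C w h = Y / \<Gamma>"
    by (simp add: Y_def field_simps)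
  have "Y / \<Gamma> \<le> Y"
    using \<open>0 \<le> Y\<close> \<Gamma>_gt_1 by (simp add: divide_le_eq mult_le_cancel_left1)
  then have "\<psi> (Y / \<Gamma>) = \<psi> Y / g"
    using \<open>0 \<le> Y\<close> \<open>Y < y\<^sub>0\<close> \<Gamma>_pos by (simp add: \<psi>_def powr_divide \<Gamma>_powr_\<kappa>)
  then have "vertex_potential V (update C w) t h = w h / update C w t * (\<psi> Y / g)"
    unfolding vertex_potential_def Y' by (simp add: w'_h)
  also have "\<dots> = w t / update C w t / g * vertex_potential V w t h"
    using \<open>0 < w t\<close> by (simp add: vertex_potential_def Y_def)
  also have "\<dots> \<le> (if t \<in> C then c else g) * vertex_potential V w t h"
  proof (intro mult_right_mono)
    show "w t / update C w t / g \<le> (if t \<in> C then c else g)"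
      using one_div_g_le_c \<Gamma>_div_g_le_g \<open>0 < w t\<close> by (simp add: divide_update)
    have "0 \<le> sum w (V - {h}) / w t"
      using assms(2) \<open>0 < w t\<close> by (auto intro!: divide_nonneg_pos sum_nonneg simp: less_imp_le)
    then show "0 \<le> vertex_potential V w t h"
      using vertex_potential_ge[OF assms(1-4)] by linarith
  qed
  finally show ?thesis .
qed


lemma vertex_potential_update_outside:
  assumes "finite V" "\<forall>u\<in>V. 0 < w u" "h \<in> V" "t \<in> V" "heavy V w h" "h \<notin> C"
  shows "vertex_potential V (update C w) t h
    \<le> (if t \<in> C then c else g) * vertex_potential V w t h"
proof -
  define Y where "Y = sum w (V - {h}) / w h"
  define Y' where "Y' = sum (update C w) (V - {h}) / update C w h"
  have "0 < w h" "0 < w t" "0 \<le> Y"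
    using assms(2-4) by (auto simp: Y_def less_imp_le intro!: divide_nonneg_pos sum_nonneg)
  have "Y < y\<^sub>0"
    using heavy_iff_ratio[of V h w] assms(1,3,5) \<open>0 < w h\<close> by (simp add: Y_def)
  have w'_h: "update C w h = w h / \<Gamma>"
    using assms(6) by (simp add: update_def)
  have "0 \<le> sum (update C w) (V - {h})"
    using update_pos[OF assms(2)] by (intro sum_nonneg) (auto simp: less_imp_le)
  moreover have "sum (update C w) (V - {h}) \<le> sum w (V - {h})"
    using assms(2) by (intro sum_mono update_le) (auto simp: less_imp_le)
  moreover have "Y' = \<Gamma> * (sum (update C w) (V - {h}) / w h)"
    using \<Gamma>_pos by (simp add: Y'_def w'_h)
  ultimately have "0 \<le> Y'" "Y' \<le> \<Gamma> * Y"
    using \<open>0 < w h\<close> \<Gamma>_pos by (auto simp: Y_def intro!: mult_left_mono divide_right_mono)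
  have "\<Gamma> * Y \<le> \<Gamma> * y\<^sub>0"
    using \<open>Y < y\<^sub>0\<close> \<Gamma>_pos by simp
  then have "\<psi> Y' \<le> K * Y' powr \<kappa>"
    using \<psi>_le_K_powr \<open>0 \<le> Y'\<close> \<open>Y' \<le> \<Gamma> * Y\<close> by simp
  also have "\<dots> \<le> K * (\<Gamma> * Y) powr \<kappa>"
    using \<open>0 \<le> Y'\<close> \<open>Y' \<le> \<Gamma> * Y\<close> \<kappa>_pos K_ge_1 by (intro mult_left_mono powr_mono2) auto
  also have "\<dots> = g * \<psi> Y"
    using \<open>0 \<le> Y\<close> \<open>Y < y\<^sub>0\<close> \<Gamma>_pos by (simp add: \<psi>_def powr_mult \<Gamma>_powr_\<kappa>)
  finally have "\<psi> Y' \<le> g * \<psi> Y" .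
  have "0 < update C w t"
    using update_pos[OF assms(2)] assms(4) by blast
  have "vertex_potential V (update C w) t h = w h / \<Gamma> / update C w t * \<psi> Y'"
    unfolding vertex_potential_def Y'_def[symmetric] by (simp add: w'_h)
  also have "\<dots> \<le> w h / \<Gamma> / update C w t * (g * \<psi> Y)"
    using \<open>\<psi> Y' \<le> g * \<psi> Y\<close> \<open>0 < w h\<close> \<open>0 < update C w t\<close> \<Gamma>_pos
    by (intro mult_left_mono) auto
  also have "\<dots> = w t / update C w t * c * vertex_potential V w t h"
    using \<open>0 < w t\<close> \<Gamma>_pos by (simp add: vertex_potential_def Y_def g_def)
  also have "\<dots> = (if t \<in> C then c else g) * vertex_potential V w t h"
    using \<open>0 < w t\<close> by (simp add: divide_update g_def mult.commute)
  finally show ?thesis .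
qed

lemma potential_update_le_no_heavy:
  assumes "finite V" "\<forall>u\<in>V. 0 < w u" "t \<in> V" "\<forall>h\<in>V. \<not> heavy V w h"
    and "sum w (C \<inter> V) \<le> (1/2 + \<eta>/4) * sum w V"
  shows "potential V (update C w) t \<le> (if t \<in> C then c else g) * potential V w t"
proof -
  have "0 < w t" "0 < update C w t"
    using assms(2,3) update_pos[OF assms(2)] by auto
  have "potential V (update C w) t \<le> vertex_potential V (update C w) t t"
    using assms(1,3) by (rule potential_le)
  also have "\<dots> \<le> sum (update C w) V / update C w t"
    by (rule vertex_potential_le[OF assms(1) update_pos[OF assms(2)] assms(3,3)])
  also have "\<dots> \<le> c * sum w V / update C w t"
    using sum_update_le[OF assms(1) _ assms(5)] assms(2) \<open>0 < update C w t\<close>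
    by (simp add: divide_right_mono less_imp_le)
  also have "\<dots> = w t / update C w t * c * (sum w V / w t)"
    using \<open>0 < w t\<close> by simp
  also have "\<dots> = (if t \<in> C then c else g) * potential V w t"
  proof -
    have "potential V w t = sum w V / w t"
      using potential_not_heavy[OF assms(1) _ assms(2,4)] assms(3) by blast
    then show ?thesis
      using \<open>0 < w t\<close> by (simp add: divide_update g_def algebra_simps)
  qed
  finally show ?thesis .
qed

lemma potential_update_le:
  assumes "finite V" "\<forall>u\<in>V. 0 < w u" "t \<in> V" "q \<in> V"
    and reply: "C \<inter> V = {q} \<or> q \<notin> C \<and> sum w (C \<inter> V) \<le> (1/2 + \<eta>/4) * sum w V"
    and only_q_heavy: "\<forall>h\<in>V. heavy V w h \<longrightarrow> h = q"
  shows "potential V (update C w) t \<le> (if t \<in> C then c else g) * potential V w t"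
proof (cases "heavy V w q")
  case True
  have "potential V (update C w) t \<le> vertex_potential V (update C w) t q"
    using assms(1,4) by (rule potential_le)
  also from reply consider "C \<inter> V = {q}" | "q \<notin> C" by blast
  then have "vertex_potential V (update C w) t q
      \<le> (if t \<in> C then c else g) * vertex_potential V w t q"
    by cases (use vertex_potential_update_singleton[OF assms(1,2,4,3) True]
      vertex_potential_update_outside[OF assms(1,2,4,3) True] in auto)
  also have "\<dots> = (if t \<in> C then c else g) * potential V w t"
    using potential_heavy[OF assms(1,2,4,3) True] by simp
  finally show ?thesis .
next
  case False
  then have "\<forall>h\<in>V. \<not> heavy V w h"
    using only_q_heavy by blast
  moreover have "sum w (C \<inter> V) \<le> (1/2 + \<eta>/4) * sum w V"
    using reply False by (auto simp: heavy_def)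
  ultimately show ?thesis
    by (rule potential_update_le_no_heavy[OF assms(1-3)])
qed

end

section \<open>Runs of LB-Search\<close>

lemma ctr_Suc:
  "ctr E qs vs (Suc i) u = ctr E qs vs i u + (if compatible E (qs ! i) (vs ! i) u then 0 else 1)"
proof -
  let ?S = "\<lambda>i. {j. j < i \<and> \<not> compatible E (qs ! j) (vs ! j) u}"
  show ?thesis
  proof (cases "compatible E (qs ! i) (vs ! i) u")
    case True
    then have "?S (Suc i) = ?S i" by (auto simp: less_Suc_eq)
    then show ?thesis using True by (simp add: ctr_def)
  next
    case False
    then have "?S (Suc i) = insert i (?S i)" by (auto simp: less_Suc_eq)
    then show ?thesis using False by (simp add: ctr_def)
  qed
qed

locale LB_run = connected_simple_graph V E + LB_potential \<eta>
  for V :: "'a set" and E and \<eta> +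
  fixes T :: nat and qs vs :: "'a list"
  assumes run: "LB_execution V E (\<eta>/4) (1 / (1 - 4*\<eta>)) T qs vs"
begin

abbreviation weight :: "nat \<Rightarrow> 'a \<Rightarrow> real" where
  "weight i \<equiv> wt (card V) \<Gamma> E qs vs i"

lemma weight_pos: "0 < weight i u"
  using finite_V V_nonempty \<Gamma>_pos by (simp add: wt_def card_gt_0_iff)

lemma weight_Suc: "weight (Suc i) = update {u. compatible E (qs ! i) (vs ! i) u} (weight i)"
  by (auto simp: fun_eq_iff wt_def update_def ctr_Suc)

lemma weight_le_weight:
  assumes "ctr E qs vs i u \<le> ctr E qs vs i t"
  shows "weight i t \<le> weight i u"
proof -
  have "\<Gamma> ^ ctr E qs vs i u \<le> \<Gamma> ^ ctr E qs vs i t"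
    using assms \<Gamma>_gt_1 by (intro power_increasing) auto
  then show ?thesis
    unfolding wt_def using \<Gamma>_pos by (intro divide_left_mono) auto
qed

lemma run_nth:
  assumes "i < T"
  shows "qs ! i \<in> V" "vs ! i \<in> V" "delta_close V E (weight i) (\<eta>/4) (qs ! i)"
  using run assms unfolding LB_execution_def \<Gamma>_def by auto

lemma potential_weight_Suc:
  assumes "i < T" "t \<in> V"
  shows "potential V (weight (Suc i)) t
    \<le> (if compatible E (qs ! i) (vs ! i) t then c else g) * potential V (weight i) t"
proof -
  define q v where "q = qs ! i" and "v = vs ! i"
  define C where "C = {u. compatible E q v u}"
  have "q \<in> V" "v \<in> V" and close: "delta_close V E (weight i) (\<eta>/4) q"
    using run_nth[OF assms(1)] by (simp_all add: q_def v_def)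
  have pos: "\<forall>u\<in>V. 0 < weight i u"
    using weight_pos by blast
  have reply: "C \<inter> V = {q} \<or> q \<notin> C \<and> sum (weight i) (C \<inter> V) \<le> (1/2 + \<eta>/4) * sum (weight i) V"
  proof (cases "v = q")
    case True
    then show ?thesis using \<open>q \<in> V\<close> by (auto simp: C_def compatible_same_reply)
  next
    case False
    have "C \<inter> V = Ncomp V E q v"
      by (auto simp: C_def Ncomp_def)
    then have "sum (weight i) (C \<inter> V) \<le> (1/2 + \<eta>/4) * sum (weight i) V"
      using wsum_Ncomp_le[OF \<open>q \<in> V\<close> \<open>v \<in> V\<close> False close] pos by (simp add: wsum_def less_imp_le)
    moreover have "q \<notin> C"
      using query_not_compatible[OF \<open>q \<in> V\<close> \<open>v \<in> V\<close> False] by (simp add: C_def)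
    ultimately show ?thesis by blast
  qed
  have "\<forall>h\<in>V. heavy V (weight i) h \<longrightarrow> h = q"
    using heavy_vertex_is_query[OF \<open>q \<in> V\<close> _ close pos] by (simp add: heavy_def wsum_def)
  from potential_update_le[OF finite_V pos assms(2) \<open>q \<in> V\<close> reply this]
  show ?thesis using assms(2) by (simp add: weight_Suc C_def q_def v_def)
qed

lemma potential_weight_le:
  assumes "i \<le> T" "t \<in> V"
  shows "potential V (weight i) t \<le> card V * c ^ i * \<Gamma> ^ ctr E qs vs i t"
  using assms(1)
proof (induction i)
  case 0
  have "potential V (weight 0) t \<le> vertex_potential V (weight 0) t t"
    using finite_V assms(2) by (rule potential_le)
  also have "\<dots> \<le> sum (weight 0) V / weight 0 t"
    using finite_V weight_pos assms(2) by (intro vertex_potential_le) auto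
  also have "\<dots> = card V"
    using finite_V V_nonempty by (simp add: wt_def ctr_def)
  finally show ?case by (simp add: ctr_def)
next
  case (Suc i)
  then have "i < T" by simp
  have "potential V (weight (Suc i)) t
      \<le> (if compatible E (qs ! i) (vs ! i) t then c else g) * potential V (weight i) t"
    by (rule potential_weight_Suc[OF \<open>i < T\<close> assms(2)])
  also have "\<dots> \<le> (if compatible E (qs ! i) (vs ! i) t then c else g)
      * (card V * c ^ i * \<Gamma> ^ ctr E qs vs i t)"
    using Suc.IH \<open>i < T\<close> c_pos g_pos by (intro mult_left_mono) auto
  also have "\<dots> = card V * c ^ Suc i * \<Gamma> ^ ctr E qs vs (Suc i) t"
    by (simp add: ctr_Suc g_def algebra_simps)
  finally show ?case .
qed

lemma ctr_le_num_errors: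
  assumes "t \<in> V"
  shows "ctr E qs vs T t \<le> num_errors E t T qs vs"
  unfolding ctr_def num_errors_def
proof (rule card_mono)
  show "{j. j < T \<and> \<not> compatible E (qs ! j) (vs ! j) t}
      \<subseteq> {j. j < T \<and> \<not> correct_reply E t (qs ! j) (vs ! j)}"
    using correct_reply_compatible[OF run_nth(1,2) assms] by auto
qed simp


lemma ctr_target_less:
  assumes "t \<in> V" "u \<in> V" "u \<noteq> t"
    and "10 * log 2 (card V) / \<eta>^2 \<le> T" "real (ctr E qs vs T t) \<le> (1/2 - \<eta>) * T"
  shows "ctr E qs vs T t < ctr E qs vs T u"
proof (rule ccontr)
  assume "\<not> ctr E qs vs T t < ctr E qs vs T u"
  then have "weight T t \<le> weight T u"
    by (intro weight_le_weight) simp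
  then have "1 \<le> potential V (weight T) t"
    by (intro potential_ge_1[OF finite_V _ assms(1-3)]) (simp add: weight_pos)
  also have "\<dots> \<le> card V * c ^ T * \<Gamma> ^ ctr E qs vs T t"
    by (rule potential_weight_le[OF order_refl assms(1)])
  also have "\<dots> < 1"
  proof (rule potential_bound_less_1)
    show "2 \<le> real (card V)"
      using assms(1-3) finite_V card_mono[of V "{t, u}"] by auto
  qed (use assms(4,5) in auto)
  finally show False by simp
qed

end

theorem lemma8:
  fixes V :: "'a set" and E :: "'a \<Rightarrow> 'a \<Rightarrow> bool" and t :: 'a
    and \<eta> :: real and qs vs :: "'a list"
  assumes "simple_graph V E" and "connected_graph V E" and "t \<in> V"
    and "0 < \<eta>" and "\<eta> < 1/8"
    and "LB_execution V E (\<eta>/4) (1 / (1 - 4*\<eta>))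
           (nat \<lceil>10 * log 2 (real (card V)) / \<eta>^2\<rceil>) qs vs"
    and "real (num_errors E t (nat \<lceil>10 * log 2 (real (card V)) / \<eta>^2\<rceil>) qs vs)
           \<le> (1/2 - \<eta>) * real (nat \<lceil>10 * log 2 (real (card V)) / \<eta>^2\<rceil>)"
  shows "\<forall>u\<in>V. u \<noteq> t \<longrightarrow>
           ctr E qs vs (nat \<lceil>10 * log 2 (real (card V)) / \<eta>^2\<rceil>) t
           < ctr E qs vs (nat \<lceil>10 * log 2 (real (card V)) / \<eta>^2\<rceil>) u"
proof -
  define T where "T = nat \<lceil>10 * log 2 (real (card V)) / \<eta>^2\<rceil>"
  interpret LB_run V E \<eta> T qs vs
    using assms(1,2,4-6) unfolding T_def by unfold_locales auto
  have "10 * log 2 (card V) / \<eta>^2 \<le> T"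
    unfolding T_def by linarith
  moreover have "real (ctr E qs vs T t) \<le> (1/2 - \<eta>) * T"
    using ctr_le_num_errors[OF assms(3)] assms(7) unfolding T_def[symmetric] by linarith
  ultimately show ?thesis
    unfolding T_def[symmetric] by (intro ballI impI ctr_target_less[OF assms(3)])
qed

end
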